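(* Let $A,B\in\mathcal{F}_2$ be commonly ordered configurations. For any fixed $d\ge d(A,B)$, there is a feasible schedule $M$ from $A$ to $B$ with makespan exactly $d$ in which each robot makes at most one turn.
   Context: Robots are axis-parallel unit squares: a robot at $p$ occupies $p+\boxdot$, $\boxdot=\{q:\|q\|_\infty\le1/2\}$. Distances use the $L_1$ norm $\|p\|=|x(p)|+|y(p)|$. A configuration of two robots is a pair $(p_1,p_2)$ with $\|p_1-p_2\|_\infty\ge 1$; $\mathcal{F}_2$ is their set. A trajectory from $a$ to $b$ over $T=[t_0,t_1]$ is a $1$-Lipschitz (w.r.t. $L_1$) map $m:T\to\mathbb{R}^2$, $m(t_0)=a$, $m(t_1)=b$, whose image is a polygonal chain; a turn is a point of the image where two segments of different orientations meet. A schedule $M=(m_1,m_2)$ over $T$ is feasible if $M(t)\in\mathcal{F}_2$ for all $t$; its makespan is $t_1-t_0$. The diameter is $d(A,B)=\max_i\|a_i-b_i\|$. The four orderings are $\mathcal{F}_2^{\rightarrow}=\{(p_1,p_2)\in\mathcal{F}_2: x(p_1)\ge x(p_2)+1\}$, $\mathcal{F}_2^{\leftarrow}=\{x(p_2)\ge x(p_1)+1\}$, $\mathcal{F}_2^{\uparrow}=\{y(p_1)\ge y(p_2)+1\}$, $\mathcal{F}_2^{\downarrow}=\{y(p_2)\ge y(p_1)+1\}$. Two configurations are commonly ordered if both lie in the same ordering. *)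

theory Defs
  imports "HOL-Analysis.Analysis"
begin

type_synonym pt = "real \<times> real"

definition l1 :: "pt \<Rightarrow> real" where
  "l1 p = \<bar>fst p\<bar> + \<bar>snd p\<bar>"

definition linf :: "pt \<Rightarrow> real" where
  "linf p = max \<bar>fst p\<bar> \<bar>snd p\<bar>"

definition F2 :: "(pt \<times> pt) set" where
  "F2 = {(p1, p2). linf (p1 - p2) \<ge> 1}"

definition F2_right :: "(pt \<times> pt) set" where
  "F2_right = {(p1, p2). (p1, p2) \<in> F2 \<and> fst p1 \<ge> fst p2 + 1}"
definition F2_left :: "(pt \<times> pt) set" where
  "F2_left = {(p1, p2). (p1, p2) \<in> F2 \<and> fst p2 \<ge> fst p1 + 1}"
definition F2_up :: "(pt \<times> pt) set" where
  "F2_up = {(p1, p2). (p1, p2) \<in> F2 \<and> snd p1 \<ge> snd p2 + 1}"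
definition F2_down :: "(pt \<times> pt) set" where
  "F2_down = {(p1, p2). (p1, p2) \<in> F2 \<and> snd p2 \<ge> snd p1 + 1}"

definition commonly_ordered :: "pt \<times> pt \<Rightarrow> pt \<times> pt \<Rightarrow> bool" where
  "commonly_ordered A B \<longleftrightarrow>
     (\<exists>Ord \<in> {F2_right, F2_left, F2_up, F2_down}. A \<in> Ord \<and> B \<in> Ord)"

definition diam :: "pt \<times> pt \<Rightarrow> pt \<times> pt \<Rightarrow> real" where
  "diam A B = max (l1 (fst A - fst B)) (l1 (snd A - snd B))"

definition polygonal_chain :: "pt set \<Rightarrow> bool" where
  "polygonal_chain S \<longleftrightarrow> (\<exists>ps. ps \<noteq> [] \<and>
     S = {hd ps} \<union> (\<Union>(p, q) \<in> set (zip ps (tl ps)). closed_segment p q))"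

definition trajectory :: "(real \<Rightarrow> pt) \<Rightarrow> real \<Rightarrow> real \<Rightarrow> pt \<Rightarrow> pt \<Rightarrow> bool" where
  "trajectory m t0 t1 a b \<longleftrightarrow> t0 \<le> t1 \<and> m t0 = a \<and> m t1 = b \<and>
     (\<forall>s \<in> {t0..t1}. \<forall>t \<in> {t0..t1}. l1 (m s - m t) \<le> \<bar>s - t\<bar>) \<and>
     polygonal_chain (m ` {t0..t1})"

definition at_most_one_turn :: "(real \<Rightarrow> pt) \<Rightarrow> real \<Rightarrow> real \<Rightarrow> bool" where
  "at_most_one_turn m t0 t1 \<longleftrightarrow>
     (\<exists>c. m ` {t0..t1} = closed_segment (m t0) c \<union> closed_segment c (m t1))"

definition feasible_schedule :: "(real \<Rightarrow> pt) \<Rightarrow> (real \<Rightarrow> pt) \<Rightarrow> real \<Rightarrow> real \<Rightarrow> bool" where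
  "feasible_schedule m1 m2 t0 t1 \<longleftrightarrow> (\<forall>t \<in> {t0..t1}. (m1 t, m2 t) \<in> F2)"

end

theory Submission
  imports Defs
begin

text \<open>Each of the four orderings is a half-space of configuration space: the inequality
  \<open>x(p\<^sub>1) \<ge> x(p\<^sub>2) + 1\<close> (or one of its three variants) already forces the two squares apart.
  Half-spaces are convex, so if \<open>A\<close> and \<open>B\<close> lie in a common ordering, the whole segment from
  \<open>A\<close> to \<open>B\<close> in configuration space is feasible. Moving both robots along straight lines at
  constant speed, so that both arrive after time \<open>d\<close>, traverses exactly this segment; each
  robot covers L1 distance at most \<open>d\<close>, hence is 1-Lipschitz, and makes no turn at all.\<close>

lemma l1_nonneg: "0 \<le> l1 p"
  by (simp add: l1_def)

lemma l1_eq_0_iff: "l1 p = 0 \<longleftrightarrow> p = 0"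
  by (cases p) (auto simp: l1_def zero_prod_def)

lemma l1_scaleR: "l1 (c *\<^sub>R p) = \<bar>c\<bar> * l1 p"
  by (cases p) (simp add: l1_def abs_mult distrib_left)

lemma l1_minus_commute: "l1 (a - b) = l1 (b - a)"
  by (simp add: l1_def abs_minus_commute)

lemma l1_diff_le_imp_nonneg: "l1 (a - b) \<le> d \<Longrightarrow> 0 \<le> d"
  using l1_nonneg[of "a - b"] by linarith

lemma l1_diff_le_0_imp_eq: "l1 (a - b) \<le> 0 \<Longrightarrow> a = b"
  using l1_nonneg[of "a - b"] l1_eq_0_iff[of "a - b"] by simp

lemma convex_superlevel_linear:
  fixes f :: "'a::real_vector \<Rightarrow> real"
  assumes "linear f"
  shows "convex {x. c \<le> f x}"
proof -
  have "{x. c \<le> f x} = f -` {c..}" by auto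
  then show ?thesis using convex_linear_vimage[OF assms convex_real_interval(1)] by simp
qed

lemma ordering_halfspace:
  assumes "Ord \<in> {F2_right, F2_left, F2_up, F2_down}"
  obtains g :: "pt \<times> pt \<Rightarrow> real" where "linear g" "Ord = {P. 1 \<le> g P}"
proof -
  have gap_linear: "linear (\<lambda>(p1, p2). f p1 - f p2)" if "linear f" for f :: "pt \<Rightarrow> real"
    using that by (auto simp: linear_iff algebra_simps)
  have "linear (\<lambda>p :: pt. s * fst p)" "linear (\<lambda>p :: pt. s * snd p)" for s :: real
    by (simp_all add: linear_iff algebra_simps)
  note gap_fst = gap_linear[OF this(1)] and gap_snd = gap_linear[OF this(2)]
  from assms consider "Ord = F2_right" | "Ord = F2_left" | "Ord = F2_up" | "Ord = F2_down"
    by blast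
  then show thesis
  proof cases
    case 1
    show thesis by (rule that[OF gap_fst[of 1]]) (auto simp: 1 F2_right_def F2_def linf_def)
  next
    case 2
    show thesis by (rule that[OF gap_fst[of "-1"]]) (auto simp: 2 F2_left_def F2_def linf_def)
  next
    case 3
    show thesis by (rule that[OF gap_snd[of 1]]) (auto simp: 3 F2_up_def F2_def linf_def)
  next
    case 4
    show thesis by (rule that[OF gap_snd[of "-1"]]) (auto simp: 4 F2_down_def F2_def linf_def)
  qed
qed

lemma ordering_convex_subset_F2:
  assumes "Ord \<in> {F2_right, F2_left, F2_up, F2_down}"
  shows "convex Ord" and "Ord \<subseteq> F2"
proof -
  from assms obtain g :: "pt \<times> pt \<Rightarrow> real" where "linear g" "Ord = {P. 1 \<le> g P}"
    by (rule ordering_halfspace)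
  then show "convex Ord"
    by (simp add: convex_superlevel_linear)
  show "Ord \<subseteq> F2"
    using assms unfolding F2_right_def F2_left_def F2_up_def F2_down_def by blast
qed

text \<open>For \<open>d = 0\<close> the division makes this the constant motion at \<open>a\<close>.\<close>
definition uniform_motion :: "real \<Rightarrow> 'a::real_vector \<Rightarrow> 'a \<Rightarrow> real \<Rightarrow> 'a" where
  "uniform_motion d a b t = a + (t / d) *\<^sub>R (b - a)"

lemma uniform_motion_Pair:
  "(uniform_motion d a1 b1 t, uniform_motion d a2 b2 t) = uniform_motion d (a1, a2) (b1, b2) t"
  by (simp add: uniform_motion_def)

lemma uniform_motion_0 [simp]: "uniform_motion d a b 0 = a"
  by (simp add: uniform_motion_def)

lemma uniform_motion_in_closed_segment:
  assumes "0 \<le> t" "t \<le> d"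
  shows "uniform_motion d a b t \<in> closed_segment a b"
proof -
  have "0 \<le> t / d" "t / d \<le> 1"
    using assms by (auto simp: divide_le_eq_1)
  moreover have "uniform_motion d a b t = (1 - t / d) *\<^sub>R a + (t / d) *\<^sub>R b"
    by (simp add: uniform_motion_def algebra_simps)
  ultimately show ?thesis
    unfolding closed_segment_def by blast
qed

lemma uniform_motion_end:
  assumes "l1 (a - b) \<le> d"
  shows "uniform_motion d a b d = b"
  using l1_diff_le_imp_nonneg[OF assms] l1_diff_le_0_imp_eq[of a b] assms
  by (cases "d = 0") (auto simp: uniform_motion_def)

lemma uniform_motion_image:
  assumes "l1 (a - b) \<le> d"
  shows "uniform_motion d a b ` {0..d} = closed_segment a b"
proof (cases "d = 0")
  case True
  then show ?thesis using l1_diff_le_0_imp_eq[of a b] assms by simp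
next
  case False
  then have "0 < d" using l1_diff_le_imp_nonneg[OF assms] by simp
  show ?thesis
  proof
    show "uniform_motion d a b ` {0..d} \<subseteq> closed_segment a b"
      using uniform_motion_in_closed_segment by auto
    show "closed_segment a b \<subseteq> uniform_motion d a b ` {0..d}"
    proof
      fix x assume "x \<in> closed_segment a b"
      then obtain u where u: "0 \<le> u" "u \<le> 1" "x = (1 - u) *\<^sub>R a + u *\<^sub>R b"
        unfolding closed_segment_def by blast
      then have "x = uniform_motion d a b (u * d)" and "u * d \<in> {0..d}"
        using \<open>0 < d\<close> by (auto simp: uniform_motion_def algebra_simps mult_left_le_one_le)
      then show "x \<in> uniform_motion d a b ` {0..d}" by blast
    qed
  qed
qed

lemma uniform_motion_l1_lipschitz:
  assumes "l1 (a - b) \<le> d"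
  shows "l1 (uniform_motion d a b s - uniform_motion d a b t) \<le> \<bar>s - t\<bar>"
proof -
  have "0 \<le> d" using l1_diff_le_imp_nonneg[OF assms] .
  have speed: "l1 (a - b) / d \<le> 1"
    using assms \<open>0 \<le> d\<close> by (cases "d = 0") auto
  have "uniform_motion d a b s - uniform_motion d a b t = ((s - t) / d) *\<^sub>R (b - a)"
    by (simp add: uniform_motion_def algebra_simps diff_divide_distrib)
  then have "l1 (uniform_motion d a b s - uniform_motion d a b t) = \<bar>s - t\<bar> * (l1 (a - b) / d)"
    using \<open>0 \<le> d\<close> by (simp add: l1_scaleR l1_minus_commute[of b a])
  also have "\<dots> \<le> \<bar>s - t\<bar>"
    using speed by (rule mult_left_le) simp
  finally show ?thesis .
qed

lemma polygonal_chain_closed_segment: "polygonal_chain (closed_segment a b)"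
  unfolding polygonal_chain_def by (intro exI[of _ "[a, b]"]) auto

lemma trajectory_uniform_motion:
  assumes "l1 (a - b) \<le> d"
  shows "trajectory (uniform_motion d a b) 0 d a b"
  unfolding trajectory_def
  using l1_diff_le_imp_nonneg[OF assms] uniform_motion_end[OF assms]
    uniform_motion_l1_lipschitz[OF assms] uniform_motion_image[OF assms]
  by (simp add: polygonal_chain_closed_segment)

lemma at_most_one_turn_uniform_motion:
  assumes "l1 (a - b) \<le> d"
  shows "at_most_one_turn (uniform_motion d a b) 0 d"
  unfolding at_most_one_turn_def uniform_motion_image[OF assms] uniform_motion_end[OF assms]
  by (intro exI[of _ b]) (simp add: insert_absorb)

lemma feasible_schedule_uniform_motion:
  assumes "convex C" "C \<subseteq> F2" "(a1, a2) \<in> C" "(b1, b2) \<in> C"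
  shows "feasible_schedule (uniform_motion d a1 b1) (uniform_motion d a2 b2) 0 d"
  unfolding feasible_schedule_def
proof
  fix t assume "t \<in> {0..d}"
  then have "uniform_motion d (a1, a2) (b1, b2) t \<in> closed_segment (a1, a2) (b1, b2)"
    by (simp add: uniform_motion_in_closed_segment)
  also have "\<dots> \<subseteq> C"
    using assms(3,4,1) by (rule closed_segment_subset)
  finally show "(uniform_motion d a1 b1 t, uniform_motion d a2 b2 t) \<in> F2"
    using assms(2) by (auto simp: uniform_motion_Pair)
qed

theorem lemma3p1:
  fixes A B :: "pt \<times> pt" and d :: real
  assumes "A \<in> F2" and "B \<in> F2"
    and "commonly_ordered A B"
    and "d \<ge> diam A B"
  shows "\<exists>t0 t1 m1 m2.
           trajectory m1 t0 t1 (fst A) (fst B) \<and>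
           trajectory m2 t0 t1 (snd A) (snd B) \<and>
           feasible_schedule m1 m2 t0 t1 \<and>
           t1 - t0 = d \<and>
           at_most_one_turn m1 t0 t1 \<and> at_most_one_turn m2 t0 t1"
proof -
  obtain a1 a2 b1 b2 where AB: "A = (a1, a2)" "B = (b1, b2)"
    by (cases A, cases B)
  have d1: "l1 (a1 - b1) \<le> d" and d2: "l1 (a2 - b2) \<le> d"
    using assms(4) by (auto simp: diam_def AB)
  obtain Ord where "Ord \<in> {F2_right, F2_left, F2_up, F2_down}" "A \<in> Ord" "B \<in> Ord"
    using assms(3) by (auto simp: commonly_ordered_def)
  then have "feasible_schedule (uniform_motion d a1 b1) (uniform_motion d a2 b2) 0 d"
    using ordering_convex_subset_F2 by (intro feasible_schedule_uniform_motion) (auto simp: AB)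
  with d1 d2 show ?thesis
    by (intro exI[of _ 0] exI[of _ d] exI[of _ "uniform_motion d a1 b1"]
        exI[of _ "uniform_motion d a2 b2"])
      (simp add: AB trajectory_uniform_motion at_most_one_turn_uniform_motion)
qed

end
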